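(* Let $\Gamma$ be a weighted digraph with vertex set $\{1,\dots,n\}$, $n>1$, without loops and with strictly positive arc weights, with Laplacian matrix $L$ and matrices of in-forests $Q_k$. For $k\ge1$ let $\Gamma_k$ be the weighted digraph on vertex set $\{1,\dots,n\}$ that has an arc $(i,j)$, $j\neq i$, exactly when $q^k_{ij}>0$, this arc having weight $q^k_{ij}$. Then for every $k=0,1,2,\dots$, $LQ_k$ is the Laplacian matrix of $\Gamma_{k+1}$.
   Context: $W=(w_{ij})$ is the matrix of arc weights ($w_{ij}>0$ iff there is an arc $i\to j$, else $0$). The Laplacian of a weighted digraph with weights $w_{ij}$ is $L=(\ell_{ij})$ with $\ell_{ij}=-w_{ij}$ for $j\ne i$, $\ell_{ii}=\sum_{k\ne i}w_{ik}$. The weight of a subgraph is the product of its arc weights (1 if no arcs); the weight of a set of subgraphs is the sum of their weights (0 for the empty set). A converging tree is a weakly connected digraph with one vertex (the root) of outdegree 0 and all others of outdegree 1; an in-forest is a spanning subgraph of $\Gamma$ whose weak components are converging trees. $Q_k=(q^k_{ij})$ where $q^k_{ij}$ is the total weight of in-forests of $\Gamma$ with $k$ arcs in which $i$ lies in a tree rooted at $j$. *)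

theory Defs
  imports Complex_Main
begin

definition arcs :: "nat \<Rightarrow> (nat \<Rightarrow> nat \<Rightarrow> real) \<Rightarrow> (nat \<times> nat) set" where
  "arcs n w = {(i, j). i \<in> {1..n} \<and> j \<in> {1..n} \<and> w i j > 0}"

definition laplacian :: "nat \<Rightarrow> (nat \<Rightarrow> nat \<Rightarrow> real) \<Rightarrow> nat \<Rightarrow> nat \<Rightarrow> real" where
  "laplacian n w i j = (if i = j then (\<Sum>k\<in>{1..n} - {i}. w i k) else - w i j)"

definition outnbrs :: "(nat \<times> nat) set \<Rightarrow> nat \<Rightarrow> nat set" where
  "outnbrs A v = {u. (v, u) \<in> A}"

definition converging_tree :: "nat set \<Rightarrow> (nat \<times> nat) set \<Rightarrow> bool" where
  "converging_tree C A \<longleftrightarrow> A \<subseteq> C \<times> C \<and> C \<noteq> {} \<and>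
     (\<forall>x\<in>C. \<forall>y\<in>C. (x, y) \<in> (A \<union> A\<inverse>)\<^sup>*) \<and>
     (\<exists>!r. r \<in> C \<and> card (outnbrs A r) = 0) \<and>
     (\<forall>v\<in>C. card (outnbrs A v) = 0 \<or> card (outnbrs A v) = 1)"

definition wcomp :: "(nat \<times> nat) set \<Rightarrow> nat \<Rightarrow> nat set" where
  "wcomp F i = {j. (i, j) \<in> (F \<union> F\<inverse>)\<^sup>*}"

definition in_forest :: "nat \<Rightarrow> (nat \<Rightarrow> nat \<Rightarrow> real) \<Rightarrow> (nat \<times> nat) set \<Rightarrow> bool" where
  "in_forest n w F \<longleftrightarrow> F \<subseteq> arcs n w \<and>
     (\<forall>i\<in>{1..n}. converging_tree (wcomp F i) (F \<inter> (wcomp F i \<times> wcomp F i)))"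

definition rooted_at :: "(nat \<times> nat) set \<Rightarrow> nat \<Rightarrow> nat \<Rightarrow> bool" where
  "rooted_at F i j \<longleftrightarrow> j \<in> wcomp F i \<and> outnbrs F j = {}"

definition forest_matrix :: "nat \<Rightarrow> (nat \<Rightarrow> nat \<Rightarrow> real) \<Rightarrow> nat \<Rightarrow> nat \<Rightarrow> nat \<Rightarrow> real" where
  "forest_matrix n w k i j =
     (\<Sum>F\<in>{F. in_forest n w F \<and> card F = k \<and> rooted_at F i j}. \<Prod>(a, b)\<in>F. w a b)"

definition gamma_weights :: "nat \<Rightarrow> (nat \<Rightarrow> nat \<Rightarrow> real) \<Rightarrow> nat \<Rightarrow> nat \<Rightarrow> nat \<Rightarrow> real" where
  "gamma_weights n w k i j =
     (if j \<noteq> i \<and> forest_matrix n w k i j > 0 then forest_matrix n w k i j else 0)"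

end

theory Submission
  imports Defs
begin

text \<open>Expanding the entries of Q_k over in-forests writes
  (L Q_k)_ij = \<Sum>_{m \<noteq> i} w_im (q^k_ij - q^k_mj)
  as a sum over pairs (F, m) of a k-arc in-forest F and an arc i \<rightarrow> m; pairs with m in
  the tree of i contribute nothing. If i is a root of F, attaching the arc i \<rightarrow> m is a
  weight-preserving bijection onto the (k+1)-arc in-forests in which i is not a root. If i is
  not a root, exchanging the arc i \<rightarrow> p leaving i for i \<rightarrow> m turns (F, m) into a pair (F', p)
  with the opposite summand, so these pairs cancel. What remains is
  \<delta>_ij \<Sum>_m q^(k+1)_im - q^(k+1)_ij, the (i, j) entry of the Laplacian of \<Gamma>_(k+1).
  In-forests are handled as functional relations in which every vertex reaches a root.\<close>

section \<open>Rooted forests as functional relations\<close>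

definition rooted_forest :: "('a \<times> 'a) set \<Rightarrow> bool" where
  "rooted_forest F \<longleftrightarrow> single_valued F \<and> (\<forall>x. \<exists>r. (x, r) \<in> F\<^sup>* \<and> r \<notin> Domain F)"

definition forest_root :: "('a \<times> 'a) set \<Rightarrow> 'a \<Rightarrow> 'a" where
  "forest_root F x = (THE r. (x, r) \<in> F\<^sup>* \<and> r \<notin> Domain F)"

definition forest_parent :: "('a \<times> 'a) set \<Rightarrow> 'a \<Rightarrow> 'a" where
  "forest_parent F x = (THE p. (x, p) \<in> F)"

lemma rooted_forest_single_valued: "rooted_forest F \<Longrightarrow> single_valued F"
  unfolding rooted_forest_def by blast

lemma rtrancl_from_sink: "r \<notin> Domain F \<Longrightarrow> (r, y) \<in> F\<^sup>* \<Longrightarrow> y = r"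
  by (erule converse_rtranclE) auto

lemma single_valued_sink_unique:
  assumes "single_valued F" "(x, r) \<in> F\<^sup>*" "r \<notin> Domain F" "(x, s) \<in> F\<^sup>*" "s \<notin> Domain F"
  shows "r = s"
  using single_valued_confluent[OF assms(1,2,4)] rtrancl_from_sink assms(3,5) by metis

lemma sink_reachable_undirected:
  assumes "single_valued F" "(x, y) \<in> (F \<union> F\<inverse>)\<^sup>*" "(x, r) \<in> F\<^sup>*" "r \<notin> Domain F"
  shows "(y, r) \<in> F\<^sup>*"
  using assms(2)
proof (induction rule: rtrancl_induct)
  case base
  show ?case using assms(3) .
next
  case (step y z)
  show ?case
  proof (cases "(z, y) \<in> F")
    case True
    then show ?thesis using step.IH by (rule converse_rtrancl_into_rtrancl)
  next
    case False
    with step.hyps(2) have yz: "(y, z) \<in> F" by blast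
    from step.IH show ?thesis
    proof (cases rule: converse_rtranclE)
      case base
      with yz assms(4) show ?thesis by auto
    next
      case (step z')
      with yz assms(1) show ?thesis by (auto dest: single_valuedD)
    qed
  qed
qed

lemma forest_root:
  assumes "rooted_forest F"
  shows "(x, forest_root F x) \<in> F\<^sup>*" and "forest_root F x \<notin> Domain F"
proof -
  have "\<exists>!r. (x, r) \<in> F\<^sup>* \<and> r \<notin> Domain F"
    using assms single_valued_sink_unique unfolding rooted_forest_def by metis
  then have "(x, forest_root F x) \<in> F\<^sup>* \<and> forest_root F x \<notin> Domain F"
    unfolding forest_root_def by (rule theI')
  then show "(x, forest_root F x) \<in> F\<^sup>*" and "forest_root F x \<notin> Domain F" by auto
qed

lemma forest_root_eqI:
  assumes "rooted_forest F" "(x, r) \<in> F\<^sup>*" "r \<notin> Domain F"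
  shows "forest_root F x = r"
  using single_valued_sink_unique[OF rooted_forest_single_valued[OF assms(1)]
      forest_root[OF assms(1)] assms(2,3)] .

lemma forest_root_rtrancl_eq:
  assumes "rooted_forest F" "(x, y) \<in> F\<^sup>*"
  shows "forest_root F x = forest_root F y"
  using forest_root_eqI[OF assms(1) rtrancl_trans[OF assms(2)] forest_root(2)[OF assms(1)]]
    forest_root(1)[OF assms(1)] by blast

lemma forest_root_ne_imp_not_rtrancl:
  "rooted_forest F \<Longrightarrow> forest_root F m \<noteq> forest_root F i \<Longrightarrow> (m, i) \<notin> F\<^sup>*"
  using forest_root_rtrancl_eq[of F m i] by blast

lemma forest_root_eq_self_iff:
  assumes "rooted_forest F"
  shows "forest_root F x = x \<longleftrightarrow> x \<notin> Domain F"
  using forest_root[OF assms, of x] forest_root_eqI[OF assms, of x x] by auto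

lemma single_valued_cycle_closed:
  assumes "single_valued F" "(x, x) \<in> F\<^sup>+" "(x, y) \<in> F\<^sup>*"
  shows "(y, x) \<in> F\<^sup>+"
  using assms(3)
proof (induction rule: rtrancl_induct)
  case base
  show ?case using assms(2) .
next
  case (step y z)
  from step.IH obtain z' where "(y, z') \<in> F" "(z', x) \<in> F\<^sup>*"
    by (blast dest: tranclD)
  with step.hyps(2) assms(1) have "(z, x) \<in> F\<^sup>*"
    by (auto dest: single_valuedD)
  then show ?case using assms(2) by (rule rtrancl_trancl_trancl)
qed

lemma rooted_forest_acyclic:
  assumes "rooted_forest F"
  shows "acyclic F"
  unfolding acyclic_def
proof (intro allI notI)
  fix x assume cycle: "(x, x) \<in> F\<^sup>+"
  have "(forest_root F x, x) \<in> F\<^sup>+"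
    by (rule single_valued_cycle_closed[OF rooted_forest_single_valued[OF assms] cycle
          forest_root(1)[OF assms]])
  then have "x = forest_root F x"
    using rtrancl_from_sink[OF forest_root(2)[OF assms]] by (meson trancl_into_rtrancl)
  with cycle show False
    using forest_root(2)[OF assms, of x] by (auto dest: tranclD)
qed

lemma rooted_forest_arc_not_back:
  assumes "rooted_forest F" "(i, p) \<in> F"
  shows "(p, i) \<notin> F\<^sup>*"
  using rooted_forest_acyclic[OF assms(1)] rtrancl_into_trancl2[OF assms(2)]
  unfolding acyclic_def by blast

lemma rooted_forest_Diff_arc_sink:
  assumes "rooted_forest F" "(i, p) \<in> F"
  shows "i \<notin> Domain (F - {(i, p)})"
  using rooted_forest_single_valued[OF assms(1)] assms(2) unfolding single_valued_def by blast

lemma rooted_forest_subset: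
  assumes "rooted_forest F" "G \<subseteq> F"
  shows "rooted_forest G"
  unfolding rooted_forest_def
proof (intro conjI allI)
  show "single_valued G"
    using rooted_forest_single_valued[OF assms(1)] assms(2) by (rule single_valued_subset[rotated])
next
  fix x
  have "(x, forest_root F x) \<in> F\<^sup>*" by (rule forest_root(1)[OF assms(1)])
  then show "\<exists>r. (x, r) \<in> G\<^sup>* \<and> r \<notin> Domain G"
  proof (induction rule: converse_rtrancl_induct)
    case base
    show ?case using forest_root(2)[OF assms(1), of x] assms(2) by blast
  next
    case (step y z)
    show ?case
    proof (cases "(y, z) \<in> G")
      case True
      then show ?thesis using step.IH by (blast intro: converse_rtrancl_into_rtrancl)
    next
      case False
      \<comment> \<open>the only arc leaving \<open>y\<close> in \<open>F\<close> is missing from \<open>G\<close>\<close>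
      with step.hyps assms(2) rooted_forest_single_valued[OF assms(1)] have "y \<notin> Domain G"
        by (auto dest: single_valuedD)
      then show ?thesis by blast
    qed
  qed
qed

lemma rtrancl_Diff_arc:
  assumes "(x, y) \<in> F\<^sup>*" "(x, i) \<notin> F\<^sup>*"
  shows "(x, y) \<in> (F - {(i, p)})\<^sup>*"
  using assms
proof (induction rule: rtrancl_induct)
  case base
  show ?case by simp
next
  case (step y z)
  then have "(y, z) \<in> F - {(i, p)}" by auto
  with step show ?case by (meson rtrancl_into_rtrancl)
qed

lemma forest_root_Diff_arc:
  assumes "rooted_forest F" "(x, i) \<notin> F\<^sup>*"
  shows "forest_root (F - {(i, p)}) x = forest_root F x"
  using forest_root[OF assms(1), of x] assms
  by (intro forest_root_eqI rooted_forest_subset[OF assms(1)] rtrancl_Diff_arc) auto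

lemma rooted_forest_insert:
  assumes F: "rooted_forest F" and i: "i \<notin> Domain F" and mi: "(m, i) \<notin> F\<^sup>*"
  shows "rooted_forest (insert (i, m) F)"
  unfolding rooted_forest_def
proof (intro conjI allI)
  let ?G = "insert (i, m) F"
  show "single_valued ?G"
    using rooted_forest_single_valued[OF F] i unfolding single_valued_def by blast
  fix x
  have FG: "F\<^sup>* \<subseteq> ?G\<^sup>*" by (rule rtrancl_mono) auto
  show "\<exists>r. (x, r) \<in> ?G\<^sup>* \<and> r \<notin> Domain ?G"
  proof (cases "forest_root F x = i")
    case False
    then show ?thesis using forest_root[OF F, of x] FG by blast
  next
    case True
    \<comment> \<open>the tree of \<open>x\<close> now hangs below \<open>m\<close>, whose root is not \<open>i\<close>\<close>
    have "(x, i) \<in> ?G\<^sup>*" using forest_root(1)[OF F, of x] True FG by auto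
    then have "(x, forest_root F m) \<in> ?G\<^sup>*"
      using forest_root(1)[OF F, of m] FG
      by (meson converse_rtrancl_into_rtrancl insertI1 rtrancl_trans subsetD)
    moreover have "forest_root F m \<noteq> i" using forest_root(1)[OF F, of m] mi by auto
    ultimately show ?thesis using forest_root(2)[OF F, of m] by blast
  qed
qed

lemma forest_root_insert:
  assumes "rooted_forest F" "i \<notin> Domain F" "(m, i) \<notin> F\<^sup>*" "(x, i) \<notin> F\<^sup>*"
  shows "forest_root (insert (i, m) F) x = forest_root F x"
proof (rule forest_root_eqI[OF rooted_forest_insert[OF assms(1-3)]])
  show "(x, forest_root F x) \<in> (insert (i, m) F)\<^sup>*"
    using forest_root(1)[OF assms(1)] rtrancl_mono[of F "insert (i, m) F"] by blast
  show "forest_root F x \<notin> Domain (insert (i, m) F)"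
    using forest_root[OF assms(1), of x] assms(4) by auto
qed

lemma forest_root_insert_tail:
  assumes "rooted_forest F" "i \<notin> Domain F" "(m, i) \<notin> F\<^sup>*"
  shows "forest_root (insert (i, m) F) i = forest_root F m"
  using forest_root_rtrancl_eq[OF rooted_forest_insert[OF assms], of i m]
    forest_root_insert[OF assms assms(3)] by auto

lemma forest_root_exchange_arc:
  assumes F: "rooted_forest F" and ip: "(i, p) \<in> F" and mi: "(m, i) \<notin> F\<^sup>*"
  defines "G \<equiv> insert (i, m) (F - {(i, p)})"
  shows "forest_root G i = forest_root F m"
    and "forest_root G p = forest_root F i"
proof -
  let ?F0 = "F - {(i, p)}"
  have F0: "rooted_forest ?F0" by (rule rooted_forest_subset[OF F]) blast
  have i0: "i \<notin> Domain ?F0" using rooted_forest_Diff_arc_sink[OF F ip] .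
  have F0F: "?F0\<^sup>* \<subseteq> F\<^sup>*" by (rule rtrancl_mono) auto
  with mi have mi0: "(m, i) \<notin> ?F0\<^sup>*" by blast
  have pi: "(p, i) \<notin> F\<^sup>*" using rooted_forest_arc_not_back[OF F ip] .
  with F0F have pi0: "(p, i) \<notin> ?F0\<^sup>*" by blast
  show "forest_root G i = forest_root F m"
    unfolding G_def forest_root_insert_tail[OF F0 i0 mi0] forest_root_Diff_arc[OF F mi] ..
  have "forest_root G p = forest_root F p"
    unfolding G_def forest_root_insert[OF F0 i0 mi0 pi0] forest_root_Diff_arc[OF F pi] ..
  also have "\<dots> = forest_root F i"
    using forest_root_rtrancl_eq[OF F r_into_rtrancl[OF ip]] by (rule sym)
  finally show "forest_root G p = forest_root F i" .
qed

lemma forest_parent_eq: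
  assumes "rooted_forest F" "(x, p) \<in> F"
  shows "forest_parent F x = p"
  unfolding forest_parent_def
proof (rule the_equality)
  show "(x, p) \<in> F" by (fact assms(2))
  show "q = p" if "(x, q) \<in> F" for q
    using rooted_forest_single_valued[OF assms(1)] assms(2) that by (auto dest: single_valuedD)
qed

lemma forest_parent:
  "rooted_forest F \<Longrightarrow> x \<in> Domain F \<Longrightarrow> (x, forest_parent F x) \<in> F"
  using forest_parent_eq by (metis DomainE)

section \<open>In-forests of the weighted digraph\<close>

lemma arcs_subset: "arcs n w \<subseteq> {1..n} \<times> {1..n}"
  unfolding arcs_def by auto

lemma finite_arcs: "finite (arcs n w)"
  using arcs_subset by (rule finite_subset) simp

lemma outnbrs_eq_empty_iff: "outnbrs F x = {} \<longleftrightarrow> x \<notin> Domain F"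
  unfolding outnbrs_def by auto

lemma finite_outnbrs: "finite F \<Longrightarrow> finite (outnbrs F x)"
  unfolding outnbrs_def by (erule finite_subset[rotated, OF finite_Range]) auto

lemma card_outnbrs_eq_0_iff: "finite F \<Longrightarrow> card (outnbrs F x) = 0 \<longleftrightarrow> x \<notin> Domain F"
  using finite_outnbrs outnbrs_eq_empty_iff by simp

lemma card_outnbrs_le_1: "single_valued F \<Longrightarrow> card (outnbrs F v) \<le> 1"
  by (cases "finite (outnbrs F v)")
    (auto simp: card_le_Suc0_iff_eq outnbrs_def single_valued_def)

lemma rtrancl_in_wcomp: "(x, y) \<in> F\<^sup>* \<Longrightarrow> y \<in> wcomp F x"
  unfolding wcomp_def using rtrancl_mono[of F "F \<union> F\<inverse>"] by blast

lemma wcomp_sink_reachable: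
  assumes "single_valued F" "r \<in> wcomp F x" "r \<notin> Domain F"
  shows "(x, r) \<in> F\<^sup>*"
proof -
  have "(x, r) \<in> (F \<union> F\<inverse>)\<^sup>*" using assms(2) unfolding wcomp_def by simp
  then have "(r, x) \<in> (F \<union> F\<inverse>)\<^sup>*" by (rule symD[OF sym_rtrancl[OF sym_Un_converse]])
  then show ?thesis by (rule sink_reachable_undirected[OF assms(1) _ rtrancl_refl assms(3)])
qed

lemma outnbrs_wcomp_restrict:
  assumes "x \<in> wcomp F i"
  shows "outnbrs (F \<inter> (wcomp F i \<times> wcomp F i)) x = outnbrs F x"
  using assms unfolding outnbrs_def wcomp_def by (auto intro: rtrancl_into_rtrancl)

lemma wcomp_restrict_connected:
  assumes "x \<in> wcomp F i"
  shows "(i, x) \<in> ((F \<inter> (wcomp F i \<times> wcomp F i)) \<union> (F \<inter> (wcomp F i \<times> wcomp F i))\<inverse>)\<^sup>*"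
proof -
  have "(i, x) \<in> (F \<union> F\<inverse>)\<^sup>*" using assms unfolding wcomp_def by simp
  then show ?thesis
  proof (induction rule: rtrancl_induct)
    case base
    show ?case by simp
  next
    case (step y z)
    then have "y \<in> wcomp F i" "z \<in> wcomp F i"
      unfolding wcomp_def by (auto intro: rtrancl_into_rtrancl)
    with step show ?case by (blast intro: rtrancl_into_rtrancl)
  qed
qed

lemma converging_tree_wcomp_iff:
  assumes "finite F"
  shows "converging_tree (wcomp F i) (F \<inter> (wcomp F i \<times> wcomp F i)) \<longleftrightarrow>
    (\<forall>v\<in>wcomp F i. card (outnbrs F v) \<le> 1) \<and> (\<exists>!r. r \<in> wcomp F i \<and> r \<notin> Domain F)"
proof -
  let ?C = "wcomp F i" and ?A = "F \<inter> (wcomp F i \<times> wcomp F i)"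
  have "i \<in> ?C" unfolding wcomp_def by simp
  have "(x, y) \<in> (?A \<union> ?A\<inverse>)\<^sup>*" if "x \<in> ?C" "y \<in> ?C" for x y
  proof -
    have "(x, i) \<in> (?A \<union> ?A\<inverse>)\<^sup>*"
      by (rule symD[OF sym_rtrancl[OF sym_Un_converse] wcomp_restrict_connected[OF that(1)]])
    then show ?thesis using wcomp_restrict_connected[OF that(2)] by (rule rtrancl_trans)
  qed
  moreover have "card (outnbrs ?A v) = 0 \<longleftrightarrow> v \<notin> Domain F" if "v \<in> ?C" for v
    using outnbrs_wcomp_restrict[OF that] card_outnbrs_eq_0_iff[OF assms] by simp
  then have "(\<lambda>r. r \<in> ?C \<and> card (outnbrs ?A r) = 0) = (\<lambda>r. r \<in> ?C \<and> r \<notin> Domain F)"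
    by (intro ext) auto
  moreover have "(\<forall>v\<in>?C. card (outnbrs ?A v) = 0 \<or> card (outnbrs ?A v) = 1) \<longleftrightarrow>
      (\<forall>v\<in>?C. card (outnbrs F v) \<le> 1)"
    by (auto simp: outnbrs_wcomp_restrict le_Suc_eq)
  ultimately show ?thesis
    unfolding converging_tree_def using \<open>i \<in> ?C\<close> by auto
qed

lemma rooted_forest_iff_wcomp:
  assumes fin: "finite F" and FV: "F \<subseteq> V \<times> V"
  shows "rooted_forest F \<longleftrightarrow>
    (\<forall>i\<in>V. (\<forall>v\<in>wcomp F i. card (outnbrs F v) \<le> 1) \<and> (\<exists>!r. r \<in> wcomp F i \<and> r \<notin> Domain F))"
    (is "_ \<longleftrightarrow> (\<forall>i\<in>V. ?deg i \<and> ?root i)")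
proof
  assume F: "rooted_forest F"
  note sv = rooted_forest_single_valued[OF F]
  show "\<forall>i\<in>V. ?deg i \<and> ?root i"
  proof (rule ballI, rule conjI)
    fix i
    show "?deg i" using card_outnbrs_le_1[OF sv] by blast
    have "r = forest_root F i" if "r \<in> wcomp F i" "r \<notin> Domain F" for r
      using forest_root_eqI[OF F wcomp_sink_reachable[OF sv that] that(2)] by simp
    then show "?root i"
      using rtrancl_in_wcomp[OF forest_root(1)[OF F]] forest_root(2)[OF F] by blast
  qed
next
  assume comps: "\<forall>i\<in>V. ?deg i \<and> ?root i"
  have sv: "single_valued F"
  proof (rule single_valuedI)
    fix x y z assume xy: "(x, y) \<in> F" and xz: "(x, z) \<in> F"
    then have "card (outnbrs F x) \<le> 1"
      using FV comps rtrancl_in_wcomp[of x x F] by blast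
    with xy xz show "y = z"
      using finite_outnbrs[OF fin] by (auto simp: card_le_Suc0_iff_eq outnbrs_def)
  qed
  have "\<exists>r. (x, r) \<in> F\<^sup>* \<and> r \<notin> Domain F" for x
  proof (cases "x \<in> V")
    case True
    then obtain r where r: "r \<in> wcomp F x" "r \<notin> Domain F" using comps by blast
    then show ?thesis using wcomp_sink_reachable[OF sv r] by blast
  next
    case False
    then show ?thesis using FV by blast
  qed
  with sv show "rooted_forest F" unfolding rooted_forest_def by blast
qed

lemma in_forest_iff: "in_forest n w F \<longleftrightarrow> F \<subseteq> arcs n w \<and> rooted_forest F"
proof (cases "F \<subseteq> arcs n w")
  case True
  then have "finite F" "F \<subseteq> {1..n} \<times> {1..n}"
    using finite_subset[OF True finite_arcs] arcs_subset by auto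
  then show ?thesis
    unfolding in_forest_def using True
    by (simp add: converging_tree_wcomp_iff rooted_forest_iff_wcomp)
next
  case False
  then show ?thesis unfolding in_forest_def by blast
qed

lemma rooted_at_iff:
  assumes F: "rooted_forest F"
  shows "rooted_at F x j \<longleftrightarrow> forest_root F x = j"
proof
  assume "rooted_at F x j"
  then have "j \<in> wcomp F x" "j \<notin> Domain F"
    unfolding rooted_at_def outnbrs_eq_empty_iff by auto
  then show "forest_root F x = j"
    using forest_root_eqI[OF F wcomp_sink_reachable[OF rooted_forest_single_valued[OF F]]] by blast
next
  assume "forest_root F x = j"
  then show "rooted_at F x j"
    using forest_root[OF F, of x] rtrancl_in_wcomp
    unfolding rooted_at_def outnbrs_eq_empty_iff by blast
qed

definition forests :: "nat \<Rightarrow> (nat \<Rightarrow> nat \<Rightarrow> real) \<Rightarrow> nat \<Rightarrow> (nat \<times> nat) set set" where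
  "forests n w k = {F. F \<subseteq> arcs n w \<and> rooted_forest F \<and> card F = k}"

definition subgraph_weight :: "(nat \<Rightarrow> nat \<Rightarrow> real) \<Rightarrow> (nat \<times> nat) set \<Rightarrow> real" where
  "subgraph_weight w F = (\<Prod>(a, b)\<in>F. w a b)"

lemma finite_forests: "finite (forests n w k)"
  unfolding forests_def using finite_arcs by (auto intro: finite_subset[of _ "Pow (arcs n w)"])

lemma subgraph_weight_nonneg: "F \<subseteq> arcs n w \<Longrightarrow> subgraph_weight w F \<ge> 0"
  unfolding subgraph_weight_def arcs_def by (intro prod_nonneg) auto

lemma subgraph_weight_insert:
  "finite F \<Longrightarrow> (a, b) \<notin> F \<Longrightarrow> subgraph_weight w (insert (a, b) F) = w a b * subgraph_weight w F"
  unfolding subgraph_weight_def by simp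

lemma forest_root_in_vertices:
  assumes "F \<subseteq> arcs n w" "rooted_forest F" "x \<in> {1..n}"
  shows "forest_root F x \<in> {1..n}"
  using rtranclD[OF forest_root(1)[OF assms(2), of x]] assms(3)
    trancl_subset_Sigma[OF subset_trans[OF assms(1) arcs_subset]] by auto

lemma insert_arc_in_forests:
  assumes F: "F \<in> forests n w k" and "i \<notin> Domain F" "(m, i) \<notin> F\<^sup>*"
    and "i \<in> {1..n}" "m \<in> {1..n}" "0 < w i m"
  shows "insert (i, m) F \<in> forests n w (Suc k)"
proof -
  have sub: "F \<subseteq> arcs n w" and rf: "rooted_forest F" and card: "card F = k"
    using F unfolding forests_def by auto
  have "finite F" by (rule finite_subset[OF sub finite_arcs])
  moreover have "(i, m) \<notin> F" using assms(2) by blast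
  moreover have "(i, m) \<in> arcs n w" using assms(4-6) unfolding arcs_def by simp
  ultimately show ?thesis
    using sub card rooted_forest_insert[OF rf assms(2,3)] unfolding forests_def by simp
qed

lemma remove_arc_in_forests:
  assumes F: "F \<in> forests n w (Suc k)" and ip: "(i, p) \<in> F"
  shows "F - {(i, p)} \<in> forests n w k"
proof -
  have sub: "F \<subseteq> arcs n w" and rf: "rooted_forest F" and card: "card F = Suc k"
    using F unfolding forests_def by auto
  have "finite F" by (rule finite_subset[OF sub finite_arcs])
  then show ?thesis
    using sub rooted_forest_subset[OF rf] card ip unfolding forests_def by auto
qed

lemma exchange_arc_in_forests:
  assumes F: "F \<in> forests n w k" and ip: "(i, p) \<in> F" and mi: "(m, i) \<notin> F\<^sup>*"
    and m: "m \<in> {1..n}" "0 < w i m"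
  shows "insert (i, m) (F - {(i, p)}) \<in> forests n w k"
proof -
  have sub: "F \<subseteq> arcs n w" and rf: "rooted_forest F"
    using F unfolding forests_def by auto
  have "card F \<noteq> 0" using ip finite_subset[OF sub finite_arcs] by auto
  then obtain k' where k: "k = Suc k'" using F unfolding forests_def by (cases k) auto
  have "(m, i) \<notin> (F - {(i, p)})\<^sup>*"
    using mi rtrancl_mono[of "F - {(i, p)}" F] by blast
  moreover have "i \<in> {1..n}" using ip sub unfolding arcs_def by auto
  ultimately show ?thesis
    using insert_arc_in_forests[OF remove_arc_in_forests[OF F[unfolded k] ip]]
      rooted_forest_Diff_arc_sink[OF rf ip] m k by simp
qed

section \<open>Forest matrices and the Laplacian of \<open>\<Gamma>\<^sub>k\<close>\<close>

lemma forest_matrix_eq_sum_forests: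
  "forest_matrix n w k i j = (\<Sum>F\<in>forests n w k. subgraph_weight w F * of_bool (forest_root F i = j))"
proof -
  have "{F. in_forest n w F \<and> card F = k \<and> rooted_at F i j} = {F \<in> forests n w k. forest_root F i = j}"
    unfolding forests_def in_forest_iff using rooted_at_iff by blast
  then show ?thesis
    unfolding forest_matrix_def subgraph_weight_def
    by (auto simp: sum.inter_filter[OF finite_forests] intro!: sum.cong)
qed

lemma forest_matrix_nonneg: "forest_matrix n w k i j \<ge> 0"
  unfolding forest_matrix_eq_sum_forests forests_def
  by (intro sum_nonneg) (auto intro: subgraph_weight_nonneg)

lemma forest_matrix_row_sum:
  assumes "i \<in> {1..n}"
  shows "(\<Sum>j\<in>{1..n}. forest_matrix n w k i j) = (\<Sum>F\<in>forests n w k. subgraph_weight w F)"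
  unfolding forest_matrix_eq_sum_forests
  using forest_root_in_vertices[OF _ _ assms]
  by (subst sum.swap) (auto simp: forests_def sum_distrib_left[symmetric] intro!: sum.cong)

lemma laplacian_gamma_weights:
  assumes "i \<in> {1..n}"
  shows "laplacian n (gamma_weights n w k) i j =
    of_bool (i = j) * (\<Sum>m\<in>{1..n}. forest_matrix n w k i m) - forest_matrix n w k i j"
proof -
  have off_diagonal: "gamma_weights n w k i m = forest_matrix n w k i m" if "m \<noteq> i" for m
    using that forest_matrix_nonneg[of n w k i m] unfolding gamma_weights_def by auto
  then have "(\<Sum>m\<in>{1..n} - {i}. gamma_weights n w k i m) = (\<Sum>m\<in>{1..n} - {i}. forest_matrix n w k i m)"
    by (intro sum.cong) auto
  moreover have "(\<Sum>m\<in>{1..n} - {i}. forest_matrix n w k i m) =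
      (\<Sum>m\<in>{1..n}. forest_matrix n w k i m) - forest_matrix n w k i i"
    using assms by (simp add: sum_diff1)
  ultimately show ?thesis
    using off_diagonal by (auto simp: laplacian_def)
qed

section \<open>Expanding \<open>L Q\<^sub>k\<close> over pairs of a forest and an arc\<close>

text \<open>The summand of the pair (F, m) in the expansion of (L Q_k)_ij.\<close>
definition expansion_term :: "(nat \<Rightarrow> nat \<Rightarrow> real) \<Rightarrow> nat \<Rightarrow> nat \<Rightarrow> (nat \<times> nat) set \<times> nat \<Rightarrow> real" where
  "expansion_term w i j = (\<lambda>(F, m). w i m * subgraph_weight w F *
     (of_bool (forest_root F i = j) - of_bool (forest_root F m = j)))"

lemma laplacian_times_forest_matrix:
  assumes "i \<in> {1..n}"
  shows "(\<Sum>m\<in>{1..n}. laplacian n w i m * forest_matrix n w k m j) =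
    (\<Sum>p\<in>forests n w k \<times> ({1..n} - {i}). expansion_term w i j p)"
proof -
  let ?q = "\<lambda>m. forest_matrix n w k m j" and ?V = "{1..n} - {i}"
  have "(\<Sum>m\<in>{1..n}. laplacian n w i m * ?q m) =
      laplacian n w i i * ?q i + (\<Sum>m\<in>?V. laplacian n w i m * ?q m)"
    using assms by (subst sum.remove) auto
  also have "\<dots> = (\<Sum>m\<in>?V. w i m * (?q i - ?q m))"
    by (simp add: laplacian_def sum_distrib_right right_diff_distrib sum_subtractf sum_negf)
  also have "\<dots> = (\<Sum>m\<in>?V. \<Sum>F\<in>forests n w k. expansion_term w i j (F, m))"
    by (simp add: forest_matrix_eq_sum_forests expansion_term_def sum_distrib_left
        sum_subtractf[symmetric] algebra_simps)
  also have "\<dots> = (\<Sum>p\<in>forests n w k \<times> ?V. expansion_term w i j p)"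
    by (subst sum.swap) (simp add: sum.cartesian_product)
  finally show ?thesis .
qed

definition attach_pairs :: "nat \<Rightarrow> (nat \<Rightarrow> nat \<Rightarrow> real) \<Rightarrow> nat \<Rightarrow> nat \<Rightarrow> ((nat \<times> nat) set \<times> nat) set" where
  "attach_pairs n w k i = {(F, m). F \<in> forests n w k \<and> m \<in> {1..n} - {i} \<and> 0 < w i m \<and>
     forest_root F m \<noteq> forest_root F i \<and> i \<notin> Domain F}"

definition exchange_pairs :: "nat \<Rightarrow> (nat \<Rightarrow> nat \<Rightarrow> real) \<Rightarrow> nat \<Rightarrow> nat \<Rightarrow> ((nat \<times> nat) set \<times> nat) set" where
  "exchange_pairs n w k i = {(F, m). F \<in> forests n w k \<and> m \<in> {1..n} - {i} \<and> 0 < w i m \<and>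
     forest_root F m \<noteq> forest_root F i \<and> i \<in> Domain F}"

lemma sum_expansion_term_split:
  assumes nonneg: "\<forall>i\<in>{1..n}. \<forall>j\<in>{1..n}. w i j \<ge> 0" and i: "i \<in> {1..n}"
  shows "(\<Sum>p\<in>forests n w k \<times> ({1..n} - {i}). expansion_term w i j p) =
    sum (expansion_term w i j) (attach_pairs n w k i) + sum (expansion_term w i j) (exchange_pairs n w k i)"
proof -
  let ?P = "forests n w k \<times> ({1..n} - {i})"
  have fin: "finite ?P" using finite_forests by simp
  have sub: "attach_pairs n w k i \<union> exchange_pairs n w k i \<subseteq> ?P"
    unfolding attach_pairs_def exchange_pairs_def by auto
  \<comment> \<open>every other pair has \<open>w i m = 0\<close> or \<open>m\<close> in the tree of \<open>i\<close>\<close>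
  have "expansion_term w i j p = 0" if "p \<in> ?P - (attach_pairs n w k i \<union> exchange_pairs n w k i)" for p
    using that nonneg i
    by (cases p) (fastforce simp: attach_pairs_def exchange_pairs_def expansion_term_def)
  then have "(\<Sum>p\<in>?P. expansion_term w i j p) =
      sum (expansion_term w i j) (attach_pairs n w k i \<union> exchange_pairs n w k i)"
    using sum.mono_neutral_right[OF fin sub] by blast
  also have "\<dots> = sum (expansion_term w i j) (attach_pairs n w k i) +
      sum (expansion_term w i j) (exchange_pairs n w k i)"
    using finite_subset[OF sub fin]
    by (intro sum.union_disjoint) (auto simp: attach_pairs_def exchange_pairs_def)
  finally show ?thesis .
qed

definition exchange_arc :: "nat \<Rightarrow> (nat \<times> nat) set \<times> nat \<Rightarrow> (nat \<times> nat) set \<times> nat" where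
  "exchange_arc i = (\<lambda>(F, m). (insert (i, m) (F - {(i, forest_parent F i)}), forest_parent F i))"

lemma exchange_arc_involution:
  assumes Fm: "(F, m) \<in> exchange_pairs n w k i"
  shows "exchange_arc i (F, m) \<in> exchange_pairs n w k i"
    and "exchange_arc i (exchange_arc i (F, m)) = (F, m)"
    and "expansion_term w i j (exchange_arc i (F, m)) = - expansion_term w i j (F, m)"
proof -
  have F: "F \<in> forests n w k" and rf: "rooted_forest F" and sub: "F \<subseteq> arcs n w"
    and m: "m \<in> {1..n}" "m \<noteq> i" "0 < w i m"
    and roots: "forest_root F m \<noteq> forest_root F i" and i: "i \<in> Domain F"
    using Fm unfolding exchange_pairs_def forests_def by auto
  define p where "p = forest_parent F i"
  have ip: "(i, p) \<in> F" unfolding p_def using forest_parent[OF rf i] .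
  have p: "p \<in> {1..n}" "0 < w i p" using ip sub unfolding arcs_def by auto
  have "p \<noteq> i" using rooted_forest_arc_not_back[OF rf ip] by blast
  have mi: "(m, i) \<notin> F\<^sup>*" using forest_root_ne_imp_not_rtrancl[OF rf roots] .
  define G where "G = insert (i, m) (F - {(i, p)})"
  have G: "G \<in> forests n w k" unfolding G_def using exchange_arc_in_forests[OF F ip mi m(1,3)] .
  have im: "(i, m) \<notin> F - {(i, p)}" using rooted_forest_Diff_arc_sink[OF rf ip] by blast
  have parent: "forest_parent G i = m"
    using G forest_parent_eq[of G i m] unfolding G_def forests_def by blast
  note roots_G = forest_root_exchange_arc[OF rf ip mi, folded G_def]
  have swap: "exchange_arc i (F, m) = (G, p)" unfolding exchange_arc_def G_def p_def by simp
  show "exchange_arc i (F, m) \<in> exchange_pairs n w k i"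
    unfolding swap exchange_pairs_def using G p \<open>p \<noteq> i\<close> roots roots_G by (auto simp: G_def)
  have "G - {(i, m)} = F - {(i, p)}" unfolding G_def using im by blast
  then have "exchange_arc i (G, p) = (F, m)"
    unfolding exchange_arc_def using parent insert_Diff[OF ip] by simp
  then show "exchange_arc i (exchange_arc i (F, m)) = (F, m)" unfolding swap .
  have fin: "finite (F - {(i, p)})" using finite_subset[OF sub finite_arcs] by simp
  have "subgraph_weight w F = w i p * subgraph_weight w (F - {(i, p)})"
    using subgraph_weight_insert[OF fin, of i p w] insert_Diff[OF ip] by simp
  moreover have "subgraph_weight w G = w i m * subgraph_weight w (F - {(i, p)})"
    unfolding G_def using subgraph_weight_insert[OF fin im] .
  ultimately show "expansion_term w i j (exchange_arc i (F, m)) = - expansion_term w i j (F, m)"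
    unfolding swap expansion_term_def using roots_G by (simp add: algebra_simps)
qed

lemma sum_exchange_pairs: "sum (expansion_term w i j) (exchange_pairs n w k i) = 0"
proof -
  have "sum (expansion_term w i j) (exchange_pairs n w k i) =
      sum (\<lambda>p. - expansion_term w i j p) (exchange_pairs n w k i)"
    by (rule sum.reindex_bij_witness[where i = "exchange_arc i" and j = "exchange_arc i"])
      (auto simp: exchange_arc_involution)
  then show ?thesis by (simp add: sum_negf)
qed

definition detach_arc :: "nat \<Rightarrow> (nat \<times> nat) set \<Rightarrow> (nat \<times> nat) set \<times> nat" where
  "detach_arc i G = (G - {(i, forest_parent G i)}, forest_parent G i)"

lemma attach_arc_to_root:
  assumes Fm: "(F, m) \<in> attach_pairs n w k i" and "i \<in> {1..n}"
  shows "insert (i, m) F \<in> {G \<in> forests n w (Suc k). i \<in> Domain G}"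
    and "detach_arc i (insert (i, m) F) = (F, m)"
    and "subgraph_weight w (insert (i, m) F) *
        (of_bool (i = j) - of_bool (forest_root (insert (i, m) F) i = j)) = expansion_term w i j (F, m)"
proof -
  have F: "F \<in> forests n w k" and rf: "rooted_forest F" and sub: "F \<subseteq> arcs n w"
    and m: "m \<in> {1..n}" "m \<noteq> i" "0 < w i m"
    and roots: "forest_root F m \<noteq> forest_root F i" and i: "i \<notin> Domain F"
    using Fm unfolding attach_pairs_def forests_def by auto
  have mi: "(m, i) \<notin> F\<^sup>*" using forest_root_ne_imp_not_rtrancl[OF rf roots] .
  let ?G = "insert (i, m) F"
  have G: "?G \<in> forests n w (Suc k)"
    using insert_arc_in_forests[OF F i mi \<open>i \<in> {1..n}\<close> m(1,3)] .
  then show "?G \<in> {G \<in> forests n w (Suc k). i \<in> Domain G}" by blast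
  have "forest_parent ?G i = m"
    using G forest_parent_eq[of ?G i m] unfolding forests_def by blast
  moreover have "(i, m) \<notin> F" using i by blast
  ultimately show "detach_arc i ?G = (F, m)" unfolding detach_arc_def by simp
  have "subgraph_weight w ?G = w i m * subgraph_weight w F"
    using subgraph_weight_insert[OF finite_subset[OF sub finite_arcs] \<open>(i, m) \<notin> F\<close>] .
  then show "subgraph_weight w ?G * (of_bool (i = j) - of_bool (forest_root ?G i = j)) =
      expansion_term w i j (F, m)"
    unfolding expansion_term_def forest_root_insert_tail[OF rf i mi]
    using forest_root_eq_self_iff[OF rf, of i] i by simp
qed

lemma detach_arc_from_nonroot:
  assumes G: "G \<in> forests n w (Suc k)" and i: "i \<in> Domain G"
  shows "detach_arc i G \<in> attach_pairs n w k i"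
    and "(\<lambda>(F, m). insert (i, m) F) (detach_arc i G) = G"
proof -
  have rf: "rooted_forest G" and sub: "G \<subseteq> arcs n w" using G unfolding forests_def by auto
  define p where "p = forest_parent G i"
  have ip: "(i, p) \<in> G" unfolding p_def using forest_parent[OF rf i] .
  let ?F = "G - {(i, p)}"
  have F: "?F \<in> forests n w k" using remove_arc_in_forests[OF G ip] .
  have rfF: "rooted_forest ?F" and iF: "i \<notin> Domain ?F"
    using F rooted_forest_Diff_arc_sink[OF rf ip] unfolding forests_def by auto
  have "forest_root ?F p \<noteq> i"
  proof
    assume "forest_root ?F p = i"
    then have "(p, i) \<in> ?F\<^sup>*" using forest_root(1)[OF rfF, of p] by simp
    then have "(p, i) \<in> G\<^sup>*" using rtrancl_mono[of ?F G] by blast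
    then show False using rooted_forest_arc_not_back[OF rf ip] by blast
  qed
  moreover have "p \<in> {1..n}" "0 < w i p" using ip sub unfolding arcs_def by auto
  moreover have "p \<noteq> i" using rooted_forest_arc_not_back[OF rf ip] by blast
  ultimately show "detach_arc i G \<in> attach_pairs n w k i"
    unfolding detach_arc_def attach_pairs_def p_def[symmetric]
    using F iF forest_root_eq_self_iff[OF rfF] by auto
  show "(\<lambda>(F, m). insert (i, m) F) (detach_arc i G) = G"
    unfolding detach_arc_def p_def[symmetric] using ip by auto
qed

lemma sum_attach_pairs:
  assumes "i \<in> {1..n}"
  shows "sum (expansion_term w i j) (attach_pairs n w k i) =
    (\<Sum>G\<in>forests n w (Suc k). subgraph_weight w G * (of_bool (i = j) - of_bool (forest_root G i = j)))"
proof -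
  let ?t = "\<lambda>G. subgraph_weight w G * (of_bool (i = j) - of_bool (forest_root G i = j))"
  let ?attach = "\<lambda>(F, m). insert (i, m) F"
  have "sum (expansion_term w i j) (attach_pairs n w k i) =
      (\<Sum>G\<in>{G \<in> forests n w (Suc k). i \<in> Domain G}. ?t G)"
  proof (rule sum.reindex_bij_witness[where i = "detach_arc i" and j = ?attach])
    fix p assume "p \<in> attach_pairs n w k i"
    moreover obtain F m where "p = (F, m)" by fastforce
    ultimately show "detach_arc i (?attach p) = p"
      and "?attach p \<in> {G \<in> forests n w (Suc k). i \<in> Domain G}"
      and "?t (?attach p) = expansion_term w i j p"
      using attach_arc_to_root[OF _ assms] by simp_all
  next
    fix G assume "G \<in> {G \<in> forests n w (Suc k). i \<in> Domain G}"
    then have G: "G \<in> forests n w (Suc k)" "i \<in> Domain G" by auto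
    show "?attach (detach_arc i G) = G" using detach_arc_from_nonroot(2)[OF G] .
    show "detach_arc i G \<in> attach_pairs n w k i" using detach_arc_from_nonroot(1)[OF G] .
  qed
  also have "\<dots> = (\<Sum>G\<in>forests n w (Suc k). ?t G)"
  proof -
    have "?t G = 0" if "G \<in> forests n w (Suc k)" "i \<notin> Domain G" for G
      using that forest_root_eq_self_iff[of G i] unfolding forests_def by simp
    then show ?thesis by (intro sum.mono_neutral_left[OF finite_forests]) auto
  qed
  finally show ?thesis .
qed

theorem proposition5:
  fixes n :: nat and w :: "nat \<Rightarrow> nat \<Rightarrow> real" and k :: nat
  assumes "n > 1"
    and "\<forall>i\<in>{1..n}. \<forall>j\<in>{1..n}. w i j \<ge> 0"
    and "\<forall>i\<in>{1..n}. w i i = 0"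
  shows "\<forall>i\<in>{1..n}. \<forall>j\<in>{1..n}.
           (\<Sum>m\<in>{1..n}. laplacian n w i m * forest_matrix n w k m j)
           = laplacian n (gamma_weights n w (k + 1)) i j"
proof (intro ballI)
  fix i j assume i: "i \<in> {1..n}" and "j \<in> {1..n}"
  have "(\<Sum>m\<in>{1..n}. laplacian n w i m * forest_matrix n w k m j) =
      sum (expansion_term w i j) (attach_pairs n w k i) + sum (expansion_term w i j) (exchange_pairs n w k i)"
    using laplacian_times_forest_matrix[OF i] sum_expansion_term_split[OF assms(2) i] by simp
  also have "\<dots> = (\<Sum>G\<in>forests n w (Suc k).
      subgraph_weight w G * (of_bool (i = j) - of_bool (forest_root G i = j)))"
    by (simp add: sum_attach_pairs[OF i] sum_exchange_pairs)
  also have "\<dots> = of_bool (i = j) * (\<Sum>G\<in>forests n w (Suc k). subgraph_weight w G) -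
      forest_matrix n w (Suc k) i j"
    by (simp add: forest_matrix_eq_sum_forests algebra_simps sum_subtractf sum_distrib_left)
  also have "\<dots> = of_bool (i = j) * (\<Sum>m\<in>{1..n}. forest_matrix n w (Suc k) i m) -
      forest_matrix n w (Suc k) i j"
    by (simp only: forest_matrix_row_sum[OF i])
  also have "\<dots> = laplacian n (gamma_weights n w (k + 1)) i j"
    by (simp add: laplacian_gamma_weights[OF i])
  finally show "(\<Sum>m\<in>{1..n}. laplacian n w i m * forest_matrix n w k m j) =
      laplacian n (gamma_weights n w (k + 1)) i j" .
qed

end
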